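(* Let $s\ge1$, $n=2s$, and let $A$ be the $n\times n$ matrix with $A_{ij}=1$ if $|i-j|\le s-1$ and $A_{ij}=0$ otherwise. Label the eigenvalues of $A$ so that $|\lambda_1(A)|\ge|\lambda_2(A)|\ge\dots\ge|\lambda_n(A)|$. Then \[ |\lambda_2(A)|=\frac{1}{\sqrt{2+2\cos\left(\frac{2s\pi}{2s+1}\right)}}, \] with corresponding eigenvector $u=[u_j]$, where $u_j=\cos\left(\frac{(2j-1)\pi}{4s+2}\right)$ for $j=1,\dots,s$ and $u_j=-u_{n-j+1}$ for $j=s+1,\dots,n$.
   Context: $A$ is the symmetric banded 0/1 matrix of even order $n=2s$ whose first row has exactly $s$ entries equal to $1$ (the model matrix of the random linear graph is $p(A-I)$). *)

theory Defs
  imports Complex_Main "Jordan_Normal_Form.Char_Poly"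
begin

definition band_mat :: "nat \<Rightarrow> real mat" where
  "band_mat s = mat (2*s) (2*s)
     (\<lambda>(i,j). if \<bar>int i - int j\<bar> \<le> int s - 1 then 1 else 0)"

text \<open>A labeling of the eigenvalues (with algebraic multiplicity, over the complex
  numbers) of a square real matrix in order of non-increasing modulus:
  ls ! 0 = lambda_1, ls ! 1 = lambda_2, ...\<close>
definition eigen_labeling :: "real mat \<Rightarrow> complex list \<Rightarrow> bool" where
  "eigen_labeling A ls \<longleftrightarrow>
     length ls = dim_row A \<and>
     char_poly (map_mat complex_of_real A) = (\<Prod>a\<leftarrow>ls. [:- a, 1:]) \<and>
     sorted_wrt (\<lambda>a b. cmod a \<ge> cmod b) ls"

text \<open>The vector u (0-based): u_k = cos((2k+1) pi/(4s+2)) for k < s, and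
  u_k = - u_(n-1-k) for s <= k < n (1-based: u_j = cos((2j-1)pi/(4s+2)), u_j = -u_(n-j+1)).\<close>
definition band_u_base :: "nat \<Rightarrow> nat \<Rightarrow> real" where
  "band_u_base s k = cos (real (2*k+1) * pi / real (4*s+2))"

definition band_u :: "nat \<Rightarrow> real vec" where
  "band_u s = vec (2*s)
     (\<lambda>k. if k < s then band_u_base s k else - band_u_base s (2*s - 1 - k))"

end

(* With \<theta> = pi/(4s+2), the entries of u are the values cos ((2l+1) \<theta>), l = 0..2s, with the
   vanishing middle one left out; telescoping the band sums gives A u = u / (2 sin \<theta>), and
   1/(2 sin \<theta>) is the claimed value.  It remains to see that this eigenvalue is lambda_2.  As A
   is real symmetric, its eigenvalues are real, their squares sum to tr (A^2) = s(3s-1), and power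
   iteration on the all-ones vector gives lambda_1^2 \<ge> ((3s-1)/2)^2.  An eigenvalue of index at
   least 3 would force lambda_1^2 + 2 mu^2 \<le> s(3s-1), which is false, and mu = lambda_1 is too
   small unless s = 1, where A is the identity. *)

theory Submission
  imports Defs "Jordan_Normal_Form.Schur_Decomposition" "HOL-Analysis.Convex"
begin

lemma sum_lessThan_add:
  fixes f :: "nat \<Rightarrow> 'a::comm_monoid_add"
  shows "sum f {..<m+n} = sum f {..<m} + (\<Sum>i<n. f (m+i))"
  by (induction n) (auto simp: add.assoc)

lemma sin_mult_sum_cos_odd:
  "2 * sin t * (\<Sum>l<m. cos (real (2*l+1) * t)) = sin (real (2*m) * t)"
proof (induction m)
  case (Suc m)
  have "2 * sin t * cos x = sin (x + t) - sin (x - t)" for x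
    by (simp add: sin_add sin_diff)
  from this[of "real (2*m+1) * t"]
  have "2 * sin t * cos (real (2*m+1) * t) = sin (real (2 * Suc m) * t) - sin (real (2*m) * t)"
    by (simp add: algebra_simps)
  then show ?case using Suc.IH by (simp add: algebra_simps)
qed simp

lemma sin_ge_cubic:
  fixes x :: real
  assumes "0 \<le> x"
  shows "x - x^3 / 6 \<le> sin x"
proof -
  have "\<bar>sin x - (\<Sum>m<3. sin_coeff m * x ^ m)\<bar> \<le> inverse (fact 3) * \<bar>x\<bar> ^ 3"
    by (rule Maclaurin_sin_bound)
  moreover have "(\<Sum>m<3. sin_coeff m * x ^ m) = x"
    by (simp add: numeral_3_eq_3 sin_coeff_def)
  moreover have "(fact 3 :: real) = 6"
    by (simp add: numeral_3_eq_3)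
  ultimately have "\<bar>sin x - x\<bar> * 6 \<le> x^3"
    using assms by simp
  then show ?thesis
    using abs_ge_minus_self[of "sin x - x"] by argo
qed

lemma pi_ge_3: "3 \<le> pi"
  using sin_x_le_x[of "pi/6"] sin_30 by simp

lemma pi_le_81_25: "pi \<le> 81/25"
proof -
  define x where "x = pi/6"
  have x: "0 \<le> x" "x \<le> 2/3" using pi_less_4 by (auto simp: x_def)
  have "x * x \<le> (2/3) * (2/3)"
    using x by (intro mult_mono) auto
  then have "x^3 \<le> x * (4/9)"
    using mult_left_mono[OF _ x(1)] by (simp add: power3_eq_cube mult.assoc)
  moreover have "x - x^3/6 \<le> 1/2"
    using sin_ge_cubic[OF x(1)] sin_30 by (simp add: x_def)
  ultimately show ?thesis by (simp add: x_def)
qed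

lemma log_convex_ge_geometric:
  fixes a :: "nat \<Rightarrow> real"
  assumes convex: "\<And>k. (a (Suc k))\<^sup>2 \<le> a k * a (Suc (Suc k))"
    and pos: "0 < a 0" "0 < a 1"
  shows "a 0 * (a 1 / a 0) ^ k \<le> a k"
proof -
  define q where "q = a 1 / a 0"
  have q: "0 < q" using pos by (simp add: q_def)
  have step: "0 < a k \<and> q * a k \<le> a (Suc k)" for k
  proof (induction k)
    case 0
    then show ?case using pos by (simp add: q_def)
  next
    case (Suc k)
    then have ak: "0 < a k" and ak1: "0 < a (Suc k)" using q by (auto intro: mult_pos_pos order.strict_trans2)
    have "q * a (Suc k) * a k \<le> (a (Suc k))\<^sup>2"
      using Suc.IH ak1 by (simp add: power2_eq_square mult_right_mono mult_ac)
    also have "\<dots> \<le> a (Suc (Suc k)) * a k"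
      using convex[of k] by (simp add: mult.commute)
    finally show ?case
      using ak ak1 by simp
  qed
  show ?thesis
    unfolding q_def[symmetric]
  proof (induction k)
    case (Suc k)
    have "a 0 * q ^ Suc k = q * (a 0 * q ^ k)" by (simp add: mult_ac)
    also have "\<dots> \<le> q * a k" using Suc.IH q by (simp add: mult_left_mono)
    also have "\<dots> \<le> a (Suc k)" using step by blast
    finally show ?case .
  qed simp
qed

lemma le_of_pow_le_const_mult_pow:
  fixes p q C :: real
  assumes bound: "\<And>k. q ^ k \<le> C * p ^ k" and p: "0 \<le> p" and q: "0 < q"
  shows "q \<le> p"
proof (rule ccontr)
  assume "\<not> q \<le> p"
  moreover have p0: "0 < p"
    using p q bound[of 1] by (cases "p = 0") auto
  ultimately have "1 < q / p" by simp
  then obtain k where "C < (q / p) ^ k" using real_arch_pow by blast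
  then have "C * p ^ k < q ^ k" using p0 by (simp add: power_divide field_simps)
  then show False using bound[of k] by simp
qed

section \<open>Traces of matrix powers\<close>

lemma index_mult_mat_vec_sum:
  assumes "A \<in> carrier_mat nr nc" "v \<in> carrier_vec nc" "i < nr"
  shows "(A *\<^sub>v v) $ i = (\<Sum>j<nc. A $$ (i,j) * v $ j)"
  using assms by (simp add: scalar_prod_def atLeast0LessThan)

definition mat_trace :: "'a::comm_monoid_add mat \<Rightarrow> 'a" where
  "mat_trace A = (\<Sum>i<dim_row A. A $$ (i,i))"

lemma mat_trace_mult_comm:
  fixes A B :: "'a::comm_semiring_0 mat"
  assumes "A \<in> carrier_mat n m" and "B \<in> carrier_mat m n"
  shows "mat_trace (A * B) = mat_trace (B * A)"
proof -
  have "mat_trace (A * B) = (\<Sum>i<n. \<Sum>l<m. A $$ (i,l) * B $$ (l,i))"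
    using assms by (simp add: mat_trace_def scalar_prod_def atLeast0LessThan)
  also have "\<dots> = (\<Sum>l<m. \<Sum>i<n. B $$ (l,i) * A $$ (i,l))"
    by (subst sum.swap) (simp add: mult.commute)
  also have "\<dots> = mat_trace (B * A)"
    using assms by (simp add: mat_trace_def scalar_prod_def atLeast0LessThan)
  finally show ?thesis .
qed

lemma mat_trace_pow_similar:
  fixes A B :: "'a::comm_ring_1 mat"
  assumes "similar_mat_wit A B P Q"
  shows "mat_trace (A ^\<^sub>m k) = mat_trace (B ^\<^sub>m k)"
proof -
  let ?n = "dim_row A"
  have c: "B \<in> carrier_mat ?n ?n" "P \<in> carrier_mat ?n ?n" "Q \<in> carrier_mat ?n ?n"
    and QP: "Q * P = 1\<^sub>m ?n"
    using assms unfolding similar_mat_wit_def Let_def by blast+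
  have Bk: "B ^\<^sub>m k \<in> carrier_mat ?n ?n" using c(1) by simp
  have "mat_trace (A ^\<^sub>m k) = mat_trace ((P * B ^\<^sub>m k) * Q)"
    by (simp add: similar_mat_wit_pow_id[OF assms])
  also have "\<dots> = mat_trace (Q * (P * B ^\<^sub>m k))"
    using c Bk by (intro mat_trace_mult_comm) auto
  also have "Q * (P * B ^\<^sub>m k) = (Q * P) * B ^\<^sub>m k"
    by (rule assoc_mult_mat[symmetric, OF c(3) c(2) Bk])
  also have "\<dots> = B ^\<^sub>m k"
    using Bk QP by (simp add: left_mult_one_mat)
  finally show ?thesis .
qed

lemma upper_triangular_mult:
  fixes A B :: "'a::semiring_0 mat"
  assumes A: "A \<in> carrier_mat n n" "upper_triangular A"
    and B: "B \<in> carrier_mat n n" "upper_triangular B"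
  shows "upper_triangular (A * B)" and "\<And>i. i < n \<Longrightarrow> (A * B) $$ (i,i) = A $$ (i,i) * B $$ (i,i)"
proof -
  have prod: "(A * B) $$ (i,j) = (\<Sum>l<n. A $$ (i,l) * B $$ (l,j))" if "i < n" "j < n" for i j
    using A B that by (simp add: scalar_prod_def atLeast0LessThan)
  have zero: "A $$ (i,l) * B $$ (l,j) = 0" if "i < n" "l < n" "l < i \<or> j < l" for i j l
    using that upper_triangularD[OF A(2), of l i] upper_triangularD[OF B(2), of j l] A B by auto
  show "upper_triangular (A * B)"
  proof (rule upper_triangularI)
    fix i j assume "j < i" "i < dim_row (A * B)"
    then have "i < n" "j < n" using A by auto
    then show "(A * B) $$ (i,j) = 0"
      unfolding prod[OF \<open>i < n\<close> \<open>j < n\<close>]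
      using zero \<open>j < i\<close> by (intro sum.neutral ballI) (metis lessThan_iff not_less_iff_gr_or_eq order.strict_trans)
  qed
  fix i assume i: "i < n"
  have "(\<Sum>l<n. A $$ (i,l) * B $$ (l,i)) = (\<Sum>l<n. if l = i then A $$ (i,i) * B $$ (i,i) else 0)"
    using i zero by (intro sum.cong refl) (auto simp: nat_neq_iff)
  then show "(A * B) $$ (i,i) = A $$ (i,i) * B $$ (i,i)"
    using i by (simp add: prod)
qed

lemma upper_triangular_pow:
  fixes B :: "'a::semiring_1 mat"
  assumes B: "B \<in> carrier_mat n n" "upper_triangular B"
  shows "upper_triangular (B ^\<^sub>m k) \<and> (\<forall>i<n. (B ^\<^sub>m k) $$ (i,i) = B $$ (i,i) ^ k)"
proof (induction k)
  case 0
  then show ?case using B by auto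
next
  case (Suc k)
  have Bk: "B ^\<^sub>m k \<in> carrier_mat n n" using B by simp
  show ?case
    using upper_triangular_mult[OF Bk _ B] Suc.IH by (simp add: power_commutes)
qed

lemma pow_mat_add:
  fixes A :: "'a::semiring_1 mat"
  assumes A: "A \<in> carrier_mat n n"
  shows "A ^\<^sub>m (k + m) = A ^\<^sub>m k * A ^\<^sub>m m"
proof (induction m)
  case 0
  then show ?case using A by simp
next
  case (Suc m)
  then show ?case
    using A by (simp add: assoc_mult_mat[of _ n n _ n _ n])
qed

lemma transpose_pow_mat_symmetric:
  fixes A :: "'a::comm_semiring_1 mat"
  assumes A: "A \<in> carrier_mat n n" "transpose_mat A = A"
  shows "transpose_mat (A ^\<^sub>m k) = A ^\<^sub>m k"
proof (induction k)
  case (Suc k)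
  have "transpose_mat (A ^\<^sub>m Suc k) = A * A ^\<^sub>m k"
    using A Suc.IH by (simp add: transpose_mult[of _ n n])
  also have "\<dots> = A ^\<^sub>m Suc k"
    using pow_mat_add[OF A(1), of 1 k] pow_mat_add[OF A(1), of k 1] A by simp
  finally show ?case .
qed (use A in auto)

lemma length_char_poly_roots:
  fixes A :: "'a::field mat"
  assumes A: "A \<in> carrier_mat n n" and cp: "char_poly A = (\<Prod>a\<leftarrow>es. [:- a, 1:])"
  shows "length es = n"
  using degree_monic_char_poly[OF A] degree_linear_factors[of uminus es] cp by simp

lemma eigenvalue_iff_mem_char_poly_roots:
  fixes A :: "'a::field mat"
  assumes A: "A \<in> carrier_mat n n" and cp: "char_poly A = (\<Prod>a\<leftarrow>es. [:- a, 1:])"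
  shows "eigenvalue A x \<longleftrightarrow> x \<in> set es"
  using eigenvalue_root_char_poly[OF A] unfolding cp by (auto simp: poly_prod_list prod_list_zero_iff)

lemma mat_trace_pow_char_poly_roots:
  fixes A :: "'a::conjugatable_ordered_field mat"
  assumes A: "A \<in> carrier_mat n n" and cp: "char_poly A = (\<Prod>a\<leftarrow>es. [:- a, 1:])"
  shows "mat_trace (A ^\<^sub>m k) = (\<Sum>a\<leftarrow>es. a ^ k)"
proof -
  obtain B P Q where "schur_decomposition A es = (B,P,Q)"
    by (cases "schur_decomposition A es") auto
  from schur_decomposition[OF A cp this]
  have sim: "similar_mat_wit A B P Q" and ut: "upper_triangular B" and diag: "diag_mat B = es"
    by auto
  have B: "B \<in> carrier_mat n n" using similar_mat_witD2[OF A sim] by blast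
  have len: "length es = n" using diag B by (auto simp: diag_mat_def)
  have "mat_trace (A ^\<^sub>m k) = mat_trace (B ^\<^sub>m k)" by (rule mat_trace_pow_similar[OF sim])
  also have "\<dots> = (\<Sum>i<n. B $$ (i,i) ^ k)"
    using upper_triangular_pow[OF B ut, of k] B by (simp add: mat_trace_def)
  also have "\<dots> = (\<Sum>i<n. (es ! i) ^ k)"
    using diag B by (auto simp: diag_mat_def)
  also have "\<dots> = (\<Sum>a\<leftarrow>es. a ^ k)"
    using len by (simp add: sum_list_sum_nth atLeast0LessThan)
  finally show ?thesis .
qed

lemma mat_trace_pow_of_real_char_poly_roots:
  fixes A :: "real mat"
  assumes A: "A \<in> carrier_mat n n"
    and cp: "char_poly (map_mat complex_of_real A) = (\<Prod>a\<leftarrow>es. [:- a, 1:])"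
  shows "complex_of_real (mat_trace (A ^\<^sub>m k)) = (\<Sum>a\<leftarrow>es. a ^ k)"
proof -
  have "complex_of_real (mat_trace (A ^\<^sub>m k)) = mat_trace (map_mat complex_of_real A ^\<^sub>m k)"
    using A by (simp add: of_real_hom.mat_hom_pow[OF A, symmetric] mat_trace_def)
  also have "\<dots> = (\<Sum>a\<leftarrow>es. a ^ k)"
    using A by (intro mat_trace_pow_char_poly_roots[OF _ cp]) simp
  finally show ?thesis .
qed

lemma mat_trace_pow_le_root_bound:
  fixes A :: "real mat"
  assumes A: "A \<in> carrier_mat n n"
    and cp: "char_poly (map_mat complex_of_real A) = (\<Prod>a\<leftarrow>es. [:- a, 1:])"
    and bound: "\<And>a. a \<in> set es \<Longrightarrow> cmod a \<le> r"
  shows "\<bar>mat_trace (A ^\<^sub>m k)\<bar> \<le> real n * r ^ k"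
proof -
  have "\<bar>mat_trace (A ^\<^sub>m k)\<bar> = cmod (\<Sum>a\<leftarrow>es. a ^ k)"
    by (metis mat_trace_pow_of_real_char_poly_roots[OF A cp] norm_of_real)
  also have "\<dots> \<le> (\<Sum>a\<leftarrow>es. cmod a ^ k)"
    by (induction es) (auto simp: norm_power intro: norm_triangle_le)
  also have "\<dots> \<le> (\<Sum>a\<leftarrow>es. r ^ k)"
    using bound by (intro sum_list_mono power_mono) auto
  also have "\<dots> = real n * r ^ k"
    using length_char_poly_roots[OF _ cp] A by (simp add: sum_list_triv)
  finally show ?thesis .
qed

lemma eigen_labeling_exists:
  assumes A: "A \<in> carrier_mat n n"
  shows "\<exists>ls. eigen_labeling A ls"
proof -
  obtain es where cp: "char_poly (map_mat complex_of_real A) = (\<Prod>a\<leftarrow>es. [:- a, 1:])"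
    and len: "length es = n"
    using char_poly_factorized[of "map_mat complex_of_real A" n] A by auto
  define ls where "ls = sort_key (\<lambda>a. - cmod a) es"
  have "mset ls = mset es" by (simp add: ls_def)
  then have "(\<Prod>a\<leftarrow>ls. [:- a, 1:]) = (\<Prod>a\<leftarrow>es. [:- a, 1:])"
    by (metis mset_map prod_mset_prod_list)
  moreover have "sorted_wrt (\<lambda>a b. cmod a \<ge> cmod b) ls"
    using sorted_sort_key[of "\<lambda>a. - cmod a" es] by (simp add: ls_def sorted_wrt_map)
  ultimately have "eigen_labeling A ls"
    using A cp len by (simp add: eigen_labeling_def ls_def)
  then show ?thesis ..
qed

lemma eigen_labeling_mono:
  assumes "eigen_labeling A ls" "i \<le> j" "j < length ls"
  shows "cmod (ls ! j) \<le> cmod (ls ! i)"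
  using assms sorted_wrt_nth_less[of "\<lambda>a b. cmod a \<ge> cmod b" ls i j]
  by (cases "i = j") (auto simp: eigen_labeling_def)

section \<open>Real symmetric matrices\<close>

lemma symmetric_scalar_prod:
  fixes A :: "'a::comm_semiring_0 mat"
  assumes A: "A \<in> carrier_mat n n" "transpose_mat A = A"
    and x: "x \<in> carrier_vec n" and y: "y \<in> carrier_vec n"
  shows "(A *\<^sub>v x) \<bullet> y = x \<bullet> (A *\<^sub>v y)"
  using transpose_vec_mult_scalar[OF A(1) y x] A x y by (simp add: comm_scalar_prod[of _ n])

lemma conjugate_mult_mat_vec_of_real:
  assumes A: "A \<in> carrier_mat n n" and v: "v \<in> carrier_vec n"
  shows "conjugate (map_mat complex_of_real A *\<^sub>v v) = map_mat complex_of_real A *\<^sub>v conjugate v"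
proof (rule eq_vecI)
  fix i assume "i < dim_vec (map_mat complex_of_real A *\<^sub>v conjugate v)"
  then have i: "i < n" using A by simp
  have "conjugate (row (map_mat complex_of_real A) i) = row (map_mat complex_of_real A) i"
    using A i by (intro eq_vecI) auto
  then show "conjugate (map_mat complex_of_real A *\<^sub>v v) $ i = (map_mat complex_of_real A *\<^sub>v conjugate v) $ i"
    using A v i conjugate_sprod_vec[of "row (map_mat complex_of_real A) i" n v] by simp
qed (use A in simp)

lemma Im_eigenvalue_real_symmetric:
  fixes A :: "real mat"
  assumes A: "A \<in> carrier_mat n n" "transpose_mat A = A"
    and ev: "eigenvalue (map_mat complex_of_real A) x"
  shows "Im x = 0"
proof -
  let ?C = "map_mat complex_of_real A"
  obtain v where v: "v \<in> carrier_vec n" "v \<noteq> 0\<^sub>v n" and Cv: "?C *\<^sub>v v = x \<cdot>\<^sub>v v"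
    using ev A unfolding eigenvalue_def eigenvector_def by auto
  have C: "?C \<in> carrier_mat n n" "transpose_mat ?C = ?C"
    using A by (auto simp: map_mat_transpose)
  have w: "conjugate v \<in> carrier_vec n" using v by simp
  have Cw: "?C *\<^sub>v conjugate v = cnj x \<cdot>\<^sub>v conjugate v"
    using conjugate_mult_mat_vec_of_real[OF A(1) v(1)] Cv v by (simp add: conjugate_smult_vec)
  have "x * (v \<bullet>c v) = (?C *\<^sub>v v) \<bullet> conjugate v"
    using Cv v by simp
  also have "\<dots> = v \<bullet> (?C *\<^sub>v conjugate v)"
    by (rule symmetric_scalar_prod[OF C v(1) w])
  also have "\<dots> = cnj x * (v \<bullet>c v)"
    using Cw v by simp
  finally have "x = cnj x"
    using v conjugate_square_greater_0_vec[of v n] by auto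
  then show ?thesis by (metis Reals_cnj_iff complex_is_Real_iff)
qed

lemma scalar_prod_Cauchy_Schwarz:
  fixes x y :: "real vec"
  assumes "x \<in> carrier_vec n" "y \<in> carrier_vec n"
  shows "(x \<bullet> y)\<^sup>2 \<le> (x \<bullet> x) * (y \<bullet> y)"
  using assms Cauchy_Schwarz_ineq_sum[of "\<lambda>i. x $ i" "\<lambda>i. y $ i" "{0..<n}"]
  by (simp add: scalar_prod_def power2_eq_square)

lemma sq_norm_mult_mat_vec_le_trace:
  fixes M :: "real mat"
  assumes M: "M \<in> carrier_mat n m" and v: "v \<in> carrier_vec m"
  shows "(M *\<^sub>v v) \<bullet> (M *\<^sub>v v) \<le> mat_trace (M * transpose_mat M) * (v \<bullet> v)"
proof -
  have "(M *\<^sub>v v) \<bullet> (M *\<^sub>v v) = (\<Sum>i<n. (row M i \<bullet> v)\<^sup>2)"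
    using M by (simp add: scalar_prod_def atLeast0LessThan power2_eq_square)
  also have "\<dots> \<le> (\<Sum>i<n. (row M i \<bullet> row M i) * (v \<bullet> v))"
    using M v by (intro sum_mono scalar_prod_Cauchy_Schwarz) auto
  also have "\<dots> = mat_trace (M * transpose_mat M) * (v \<bullet> v)"
    using M by (simp add: mat_trace_def sum_distrib_right)
  finally show ?thesis .
qed

lemma symmetric_sq_norm_pow_log_convex:
  fixes A :: "real mat" and x :: "nat \<Rightarrow> real vec"
  assumes A: "A \<in> carrier_mat n n" "transpose_mat A = A" and v: "v \<in> carrier_vec n"
  defines "x \<equiv> \<lambda>k. A ^\<^sub>m k *\<^sub>v v"
  shows "(x (Suc k) \<bullet> x (Suc k))\<^sup>2 \<le> (x k \<bullet> x k) * (x (Suc (Suc k)) \<bullet> x (Suc (Suc k)))"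
proof -
  have x: "x k \<in> carrier_vec n" for k
    using A v unfolding x_def by (intro mult_mat_vec_carrier[of _ n n]) auto
  have x_Suc: "x (Suc k) = A *\<^sub>v x k" for k
    using pow_mat_add[OF A(1), of 1 k] A v by (simp add: x_def assoc_mult_mat_vec[of _ n n _ n])
  have "x (Suc k) \<bullet> x (Suc k) = (A *\<^sub>v x k) \<bullet> x (Suc k)"
    by (subst (1) x_Suc) (rule refl)
  also have "\<dots> = x k \<bullet> x (Suc (Suc k))"
    unfolding x_Suc[of "Suc k"] by (rule symmetric_scalar_prod[OF A x x])
  finally show ?thesis
    by (simp add: scalar_prod_Cauchy_Schwarz[OF x x])
qed

lemma symmetric_sq_norm_pow_le_root_bound:
  fixes A :: "real mat"
  assumes A: "A \<in> carrier_mat n n" "transpose_mat A = A"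
    and cp: "char_poly (map_mat complex_of_real A) = (\<Prod>a\<leftarrow>es. [:- a, 1:])"
    and bound: "\<And>a. a \<in> set es \<Longrightarrow> cmod a \<le> r"
    and v: "v \<in> carrier_vec n"
  shows "(A ^\<^sub>m k *\<^sub>v v) \<bullet> (A ^\<^sub>m k *\<^sub>v v) \<le> real n * (r\<^sup>2) ^ k * (v \<bullet> v)"
proof -
  have Ak: "A ^\<^sub>m k \<in> carrier_mat n n" using A by simp
  have "(A ^\<^sub>m k *\<^sub>v v) \<bullet> (A ^\<^sub>m k *\<^sub>v v) \<le> mat_trace (A ^\<^sub>m k * transpose_mat (A ^\<^sub>m k)) * (v \<bullet> v)"
    by (rule sq_norm_mult_mat_vec_le_trace[OF Ak v])
  also have "A ^\<^sub>m k * transpose_mat (A ^\<^sub>m k) = A ^\<^sub>m (k + k)"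
    using transpose_pow_mat_symmetric[OF A] pow_mat_add[OF A(1)] by simp
  also have "mat_trace (A ^\<^sub>m (k + k)) \<le> real n * r ^ (k + k)"
    using mat_trace_pow_le_root_bound[OF A(1) cp bound] by (meson abs_le_D1)
  finally show ?thesis
    by (simp add: power_mult[symmetric] mult_2 scalar_prod_def sum_nonneg mult_right_mono)
qed

text \<open>Power iteration: a k = |A^k v|^2 is log-convex, so it grows at least like (a 1 / a 0)^k,
  while a k \<le> tr (A^(2k)) |v|^2 \<le> n r^(2k) |v|^2.\<close>

lemma symmetric_sq_norm_mult_le_root_bound:
  fixes A :: "real mat"
  assumes A: "A \<in> carrier_mat n n" "transpose_mat A = A"
    and cp: "char_poly (map_mat complex_of_real A) = (\<Prod>a\<leftarrow>es. [:- a, 1:])"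
    and bound: "\<And>a. a \<in> set es \<Longrightarrow> cmod a \<le> r"
    and v: "v \<in> carrier_vec n"
  shows "(A *\<^sub>v v) \<bullet> (A *\<^sub>v v) \<le> r\<^sup>2 * (v \<bullet> v)"
proof -
  define a where "a k = (A ^\<^sub>m k *\<^sub>v v) \<bullet> (A ^\<^sub>m k *\<^sub>v v)" for k
  have a_nonneg: "0 \<le> a k" for k
    unfolding a_def by (simp add: scalar_prod_def sum_nonneg)
  have a_0: "a 0 = v \<bullet> v" and a_1: "a 1 = (A *\<^sub>v v) \<bullet> (A *\<^sub>v v)"
    using A v by (simp_all add: a_def)
  have upper: "a k \<le> real n * (r\<^sup>2) ^ k * (v \<bullet> v)" for k
    using symmetric_sq_norm_pow_le_root_bound[OF A cp bound v, of k] by (simp add: a_def)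
  show ?thesis
  proof (cases "a 0 = 0 \<or> a 1 = 0")
    case True
    then have "a 1 = 0"
      using upper[of 1] a_nonneg[of 1] a_0 by auto
    then show ?thesis
      using a_0 a_1 a_nonneg[of 0] by simp
  next
    case False
    then have pos: "0 < a 0" "0 < a 1" using a_nonneg[of 0] a_nonneg[of 1] by auto
    have "a 0 * (a 1 / a 0) ^ k \<le> a 0 * (real n * (r\<^sup>2) ^ k)" for k
      using log_convex_ge_geometric[of a, OF _ pos, of k] upper[of k]
        symmetric_sq_norm_pow_log_convex[OF A v] a_0 by (simp add: a_def mult_ac)
    then have "(a 1 / a 0) ^ k \<le> real n * (r\<^sup>2) ^ k" for k
      using pos by simp
    then have "a 1 / a 0 \<le> r\<^sup>2"
      by (rule le_of_pow_le_const_mult_pow) (use pos in auto)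
    then show ?thesis
      using pos a_0 a_1 by (simp add: field_simps)
  qed
qed

section \<open>The band matrix and its eigenvector\<close>

lemma band_mat_carrier: "band_mat s \<in> carrier_mat (2*s) (2*s)"
  by (simp add: band_mat_def)

lemma band_mat_index:
  "i < 2*s \<Longrightarrow> j < 2*s \<Longrightarrow> band_mat s $$ (i,j) = (if \<bar>int i - int j\<bar> \<le> int s - 1 then 1 else 0)"
  by (simp add: band_mat_def)

lemma band_mat_reflect:
  "i < 2*s \<Longrightarrow> j < 2*s \<Longrightarrow> band_mat s $$ (2*s - 1 - i, 2*s - 1 - j) = band_mat s $$ (i,j)"
  by (auto simp: band_mat_index)

lemma band_mat_symmetric: "transpose_mat (band_mat s) = band_mat s"
  by (rule eq_matI) (auto simp: band_mat_def)

lemma band_mat_row_sum: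
  assumes "i < 2*s"
  shows "(\<Sum>j<2*s. band_mat s $$ (i,j)) = (if i < s then real (i + s) else real (3*s - 1 - i))"
proof -
  have "(\<Sum>j<2*s. band_mat s $$ (i,j)) = real (card {j\<in>{..<2*s}. \<bar>int i - int j\<bar> \<le> int s - 1})"
    using assms by (simp add: band_mat_index sum.If_cases Int_def)
  also have "{j\<in>{..<2*s}. \<bar>int i - int j\<bar> \<le> int s - 1} = (if i < s then {..<i+s} else {i+1-s..<2*s})"
    using assms by auto
  finally show ?thesis
    using assms by auto
qed

lemma band_mat_entry_sum:
  "(\<Sum>i<2*s. \<Sum>j<2*s. band_mat s $$ (i,j)) = real s * (3 * real s - 1)"
proof -
  have "(\<Sum>i<2*s. \<Sum>j<2*s. band_mat s $$ (i,j))
      = (\<Sum>i<s+s. if i < s then real (i + s) else real (3*s - 1 - i))"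
    by (intro sum.cong) (auto simp: band_mat_row_sum)
  also have "\<dots> = (\<Sum>i<s. real (i + s)) + (\<Sum>i<s. real (3*s - 1 - (s + i)))"
    unfolding sum_lessThan_add by simp
  also have "\<dots> = (\<Sum>i<s. real (i + s) + real (3*s - 1 - (s + i)))"
    by (rule sum.distrib[symmetric])
  also have "\<dots> = (\<Sum>i<s. 3 * real s - 1)"
    by (intro sum.cong) (auto simp: of_nat_diff)
  finally show ?thesis by simp
qed

lemma band_mat_trace: "s \<ge> 1 \<Longrightarrow> mat_trace (band_mat s) = real (2*s)"
  by (simp add: mat_trace_def band_mat_def)

lemma band_mat_trace_sq: "mat_trace (band_mat s ^\<^sub>m 2) = real s * (3 * real s - 1)"
proof -
  have "mat_trace (band_mat s ^\<^sub>m 2) = (\<Sum>i<2*s. \<Sum>j<2*s. band_mat s $$ (i,j) * band_mat s $$ (j,i))"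
    using band_mat_carrier[of s]
    by (simp add: numeral_2_eq_2 mat_trace_def scalar_prod_def atLeast0LessThan)
  also have "\<dots> = (\<Sum>i<2*s. \<Sum>j<2*s. band_mat s $$ (i,j))"
    by (intro sum.cong) (auto simp: band_mat_index)
  finally show ?thesis by (simp add: band_mat_entry_sum)
qed

lemma band_mat_mult_ones:
  fixes s :: nat
  defines "e \<equiv> vec (2*s) (\<lambda>_. 1)"
  shows "(real s * (3 * real s - 1))\<^sup>2 \<le> real (2*s) * ((band_mat s *\<^sub>v e) \<bullet> (band_mat s *\<^sub>v e))"
proof -
  have e: "e \<in> carrier_vec (2*s)" by (simp add: e_def)
  have "e \<bullet> (band_mat s *\<^sub>v e) = (\<Sum>i<2*s. \<Sum>j<2*s. band_mat s $$ (i,j))"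
    using band_mat_carrier[of s]
    by (simp add: e_def scalar_prod_def atLeast0LessThan)
  moreover have "e \<bullet> e = real (2*s)"
    by (simp add: e_def scalar_prod_def)
  ultimately show ?thesis
    using scalar_prod_Cauchy_Schwarz[OF e mult_mat_vec_carrier[OF band_mat_carrier e]]
    by (simp add: band_mat_entry_sum)
qed

definition band_angle :: "nat \<Rightarrow> real" where
  "band_angle s = pi / real (4*s+2)"

definition band_eigenvalue :: "nat \<Rightarrow> real" where
  "band_eigenvalue s = 1 / (2 * sin (band_angle s))"

lemma band_angle_bounds:
  assumes "s \<ge> 1"
  shows "0 < band_angle s" "band_angle s \<le> pi / 6"
  using assms by (auto simp: band_angle_def field_simps)

lemma sin_band_angle_pos: "s \<ge> 1 \<Longrightarrow> 0 < sin (band_angle s)"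
  using band_angle_bounds[of s] pi_gt_zero by (intro sin_gt_zero) linarith+

lemma band_angle_half_turn: "real (4*s+2) * band_angle s = pi"
  by (simp add: band_angle_def)

lemma band_eigenvalue_pos: "s \<ge> 1 \<Longrightarrow> 0 < band_eigenvalue s"
  using sin_band_angle_pos[of s] by (simp add: band_eigenvalue_def)

lemma band_eigenvalue_one: "band_eigenvalue 1 = 1"
  using sin_30 by (simp add: band_eigenvalue_def band_angle_def)

lemma band_eigenvalue_closed_form:
  assumes "s \<ge> 1"
  shows "1 / sqrt (2 + 2 * cos (real (2*s) * pi / real (2*s+1))) = band_eigenvalue s"
proof -
  let ?t = "band_angle s"
  have "real (2*s) * pi / real (2*s+1) = pi - 2 * ?t"
    by (simp add: band_angle_def field_simps)
  then have "2 + 2 * cos (real (2*s) * pi / real (2*s+1)) = (2 * sin ?t)\<^sup>2"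
    by (simp add: cos_double_sin power2_eq_square)
  then have "sqrt (2 + 2 * cos (real (2*s) * pi / real (2*s+1))) = \<bar>2 * sin ?t\<bar>"
    by (simp only: real_sqrt_abs)
  then show ?thesis
    using sin_band_angle_pos[OF assms] by (simp add: band_eigenvalue_def)
qed

lemma band_eigenvalue_lower:
  assumes "s \<ge> 1"
  shows "real s * (3 * real s - 1) < ((3 * real s - 1) / 2)\<^sup>2 + 2 * (band_eigenvalue s)\<^sup>2"
proof -
  let ?t = "band_angle s"
  have "sin ?t \<le> ?t" using band_angle_bounds[OF assms] by (intro sin_x_le_x) simp
  then have "(2 * real s + 1) / (81/25) \<le> band_eigenvalue s"
    using sin_band_angle_pos[OF assms] pi_le_81_25
    by (simp add: band_eigenvalue_def band_angle_def field_simps)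
  then have "((2 * real s + 1) / (81/25))\<^sup>2 \<le> (band_eigenvalue s)\<^sup>2"
    by (rule power_mono) simp
  moreover have "real s * (3 * real s - 1) < ((3 * real s - 1)/2)\<^sup>2 + 2 * ((2 * real s + 1) / (81/25))\<^sup>2"
    by (simp add: power2_eq_square field_simps) (simp add: add_pos_nonneg)
  ultimately show ?thesis by linarith
qed

lemma band_eigenvalue_upper:
  assumes "s \<ge> 2"
  shows "band_eigenvalue s < (3 * real s - 1) / 2"
proof -
  let ?t = "band_angle s"
  have t: "0 < ?t" "?t \<le> 81/250"
    using assms pi_le_81_25 by (auto simp: band_angle_def field_simps)
  have "3 / real (4*s+2) \<le> ?t"
    unfolding band_angle_def using pi_ge_3 by (intro divide_right_mono) auto
  have "?t * ?t \<le> (81/250) * (81/250)"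
    using t by (intro mult_mono) auto
  then have "?t^3 \<le> ?t * (6561/62500)"
    using mult_left_mono[OF _ less_imp_le[OF t(1)]] by (simp add: power3_eq_cube mult.assoc)
  then have "?t * (49/50) \<le> ?t - ?t^3/6"
    using t by simp
  then have "3 / real (4*s+2) * (49/50) \<le> sin ?t"
    using sin_ge_cubic[OF less_imp_le[OF t(1)]] \<open>3 / real (4*s+2) \<le> ?t\<close> by argo
  then have "(3 * real s - 1) * (3 / real (4*s+2) * (49/50)) \<le> (3 * real s - 1) * sin ?t"
    using assms by (intro mult_left_mono) auto
  moreover have "1 < (3 * real s - 1) * (3 / real (4*s+2) * (49/50))"
    using assms by (simp add: field_simps)
  ultimately have "1 < (3 * real s - 1) * sin ?t" by linarith
  then show ?thesis
    using sin_band_angle_pos[of s] assms by (simp add: band_eigenvalue_def field_simps)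
qed

lemma band_u_carrier: "band_u s \<in> carrier_vec (2*s)"
  by (simp add: band_u_def)

lemma band_u_antisymmetric: "j < 2*s \<Longrightarrow> band_u s $ (2*s - 1 - j) = - band_u s $ j"
  by (auto simp: band_u_def)

text \<open>With c l = cos ((2l+1) \<theta>), the vector u is c with its zero entry c s removed, so its
  partial sums telescope (sin_mult_sum_cos_odd).\<close>

lemma band_u_index:
  assumes "j < 2*s"
  shows "band_u s $ j = cos (real (2 * (if j < s then j else Suc j) + 1) * band_angle s)"
proof (cases "j < s")
  case False
  have "real (2 * (2*s - 1 - j) + 1) * band_angle s = pi - real (2 * Suc j + 1) * band_angle s"
    using False assms band_angle_half_turn[of s] by (simp add: of_nat_diff algebra_simps)
  then show ?thesis
    using False assms by (simp add: band_u_def band_u_base_def band_angle_def)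
qed (use assms in \<open>simp add: band_u_def band_u_base_def band_angle_def\<close>)

lemma band_u_partial_sum:
  assumes "s \<le> m" "m \<le> 2*s"
  shows "(\<Sum>j<m. band_u s $ j) = (\<Sum>l<Suc m. cos (real (2*l+1) * band_angle s))"
  using assms
proof (induction m rule: dec_induct)
  case base
  have "real (2*s+1) * band_angle s = pi / 2"
    using band_angle_half_turn[of s] by (simp add: algebra_simps)
  then have "cos (real (2*s+1) * band_angle s) = 0" by (simp only: cos_pi_half)
  then show ?case
    by (simp add: band_u_index)
next
  case (step m)
  then show ?case by (simp add: band_u_index)
qed

lemma band_mat_row_sum_band_u:
  assumes "k < s"
  shows "(band_mat s *\<^sub>v band_u s) $ k = (\<Sum>j<k+s. band_u s $ j)"
proof -
  have "(band_mat s *\<^sub>v band_u s) $ k = (\<Sum>j<2*s. band_mat s $$ (k,j) * band_u s $ j)"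
    using assms by (intro index_mult_mat_vec_sum[OF band_mat_carrier band_u_carrier]) simp
  also have "\<dots> = (\<Sum>j<2*s. if j < k+s then band_u s $ j else 0)"
    using assms by (intro sum.cong) (auto simp: band_mat_index)
  also have "\<dots> = (\<Sum>j\<in>{j\<in>{..<2*s}. j < k+s}. band_u s $ j)"
    by (rule sum.inter_filter[symmetric]) simp
  also have "{j\<in>{..<2*s}. j < k+s} = {..<k+s}"
    using assms by auto
  finally show ?thesis .
qed

lemma band_mat_mult_band_u_index_low:
  assumes "k < s"
  shows "2 * sin (band_angle s) * (band_mat s *\<^sub>v band_u s) $ k = band_u s $ k"
proof -
  have "real (2 * Suc (k+s)) * band_angle s = pi / 2 + real (2*k+1) * band_angle s"
    using band_angle_half_turn[of s] by (simp add: algebra_simps)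
  then have "sin (real (2 * Suc (k+s)) * band_angle s) = cos (real (2*k+1) * band_angle s)"
    by (simp add: sin_add)
  then show ?thesis
    using assms band_u_partial_sum[of s "k+s"] sin_mult_sum_cos_odd[of "band_angle s" "Suc (k+s)"]
    by (simp add: band_mat_row_sum_band_u band_u_index)
qed

lemma band_mat_mult_band_u_index:
  assumes "k < 2*s"
  shows "2 * sin (band_angle s) * (band_mat s *\<^sub>v band_u s) $ k = band_u s $ k"
proof (cases "k < s")
  case False
  define k' where "k' = 2*s - 1 - k"
  have k': "k' < s" "k = 2*s - 1 - k'" using False assms by (auto simp: k'_def)
  have "(band_mat s *\<^sub>v band_u s) $ k = (\<Sum>j<2*s. band_mat s $$ (k,j) * band_u s $ j)"
    using assms by (intro index_mult_mat_vec_sum[OF band_mat_carrier band_u_carrier])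
  also have "\<dots> = (\<Sum>j<2*s. band_mat s $$ (k, 2*s - Suc j) * band_u s $ (2*s - Suc j))"
    by (rule sum.nat_diff_reindex[symmetric])
  also have "\<dots> = (\<Sum>j<2*s. - (band_mat s $$ (k', j) * band_u s $ j))"
  proof (intro sum.cong refl)
    fix j assume "j \<in> {..<2*s}"
    then show "band_mat s $$ (k, 2*s - Suc j) * band_u s $ (2*s - Suc j) = - (band_mat s $$ (k', j) * band_u s $ j)"
      using k' band_mat_reflect[of k' s j] band_u_antisymmetric[of j s] by (simp add: Suc_diff_Suc)
  qed
  also have "\<dots> = - (band_mat s *\<^sub>v band_u s) $ k'"
    using k' by (simp add: sum_negf index_mult_mat_vec_sum[OF band_mat_carrier band_u_carrier])
  finally show ?thesis
    using band_mat_mult_band_u_index_low[OF k'(1)] band_u_antisymmetric[of k' s] k' by simp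
qed (rule band_mat_mult_band_u_index_low)

lemma band_mat_mult_band_u:
  assumes "s \<ge> 1"
  shows "band_mat s *\<^sub>v band_u s = band_eigenvalue s \<cdot>\<^sub>v band_u s"
proof (rule eq_vecI)
  fix k assume "k < dim_vec (band_eigenvalue s \<cdot>\<^sub>v band_u s)"
  then have "k < 2*s" by (simp add: band_u_def)
  then show "(band_mat s *\<^sub>v band_u s) $ k = (band_eigenvalue s \<cdot>\<^sub>v band_u s) $ k"
    using band_mat_mult_band_u_index[of k s] sin_band_angle_pos[OF assms]
    by (simp add: band_eigenvalue_def band_u_def field_simps)
qed (simp add: band_mat_def band_u_def)

lemma band_u_nonzero:
  assumes "s \<ge> 1"
  shows "band_u s \<noteq> 0\<^sub>v (2*s)"
proof
  assume "band_u s = 0\<^sub>v (2*s)"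
  then have "cos (band_angle s) = 0"
    using assms band_u_index[of 0 s] by simp
  moreover have "0 < cos (band_angle s)"
    using band_angle_bounds[OF assms] pi_gt_zero by (intro cos_gt_zero) linarith+
  ultimately show False by simp
qed

lemma band_eigenvector:
  assumes "s \<ge> 1"
  shows "eigenvector (map_mat complex_of_real (band_mat s)) (map_vec complex_of_real (band_u s))
           (complex_of_real (band_eigenvalue s))"
  unfolding eigenvector_def
  using band_mat_carrier[of s] band_u_carrier[of s] band_u_nonzero[OF assms] band_mat_mult_band_u[OF assms]
  by (auto simp: of_real_hom.mult_mat_vec_hom[symmetric] of_real_hom.vec_hom_smult)

section \<open>The spectrum of the band matrix\<close>

lemma band_labeling_real:
  assumes "eigen_labeling (band_mat s) ls" "a \<in> set ls"
  shows "Im a = 0"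
proof (rule Im_eigenvalue_real_symmetric[OF band_mat_carrier band_mat_symmetric])
  show "eigenvalue (map_mat complex_of_real (band_mat s)) a"
    using assms band_mat_carrier[of s]
    by (subst eigenvalue_iff_mem_char_poly_roots[of _ "2*s" ls]) (auto simp: eigen_labeling_def)
qed

lemma band_labeling_sum:
  assumes "s \<ge> 1" "eigen_labeling (band_mat s) ls"
  shows "(\<Sum>a\<leftarrow>ls. a) = of_nat (2*s)"
  using mat_trace_pow_of_real_char_poly_roots[OF band_mat_carrier[of s], where es = ls and k = 1] assms
  by (simp add: eigen_labeling_def band_mat_trace)

lemma band_labeling_sum_sq:
  assumes "eigen_labeling (band_mat s) ls"
  shows "(\<Sum>a\<leftarrow>ls. (cmod a)\<^sup>2) = real s * (3 * real s - 1)"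
proof -
  have "complex_of_real (\<Sum>a\<leftarrow>ls. (cmod a)\<^sup>2) = (\<Sum>a\<leftarrow>ls. a\<^sup>2)"
    using band_labeling_real[OF assms]
    by (induction ls) (auto simp: complex_eq_iff power2_eq_square cmod_def)
  also have "\<dots> = complex_of_real (mat_trace (band_mat s ^\<^sub>m 2))"
    using assms by (simp add: mat_trace_pow_of_real_char_poly_roots[OF band_mat_carrier] eigen_labeling_def)
  finally show ?thesis
    unfolding of_real_eq_iff band_mat_trace_sq .
qed

lemma band_labeling_largest:
  assumes s: "s \<ge> 1" and L: "eigen_labeling (band_mat s) ls"
  shows "((3 * real s - 1) / 2)\<^sup>2 \<le> (cmod (ls ! 0))\<^sup>2"
proof -
  define e where "e = vec (2*s) (\<lambda>_. 1::real)"
  have cp: "char_poly (map_mat complex_of_real (band_mat s)) = (\<Prod>a\<leftarrow>ls. [:- a, 1:])"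
    and len: "length ls = 2*s"
    using L by (auto simp: eigen_labeling_def band_mat_def)
  have "cmod a \<le> cmod (ls ! 0)" if "a \<in> set ls" for a
    using that eigen_labeling_mono[OF L, of 0] by (auto simp: in_set_conv_nth)
  then have "(band_mat s *\<^sub>v e) \<bullet> (band_mat s *\<^sub>v e) \<le> (cmod (ls ! 0))\<^sup>2 * (e \<bullet> e)"
    by (intro symmetric_sq_norm_mult_le_root_bound[OF band_mat_carrier band_mat_symmetric cp])
      (auto simp: e_def)
  moreover have "e \<bullet> e = real (2*s)"
    by (simp add: e_def scalar_prod_def)
  ultimately have "(real s * (3 * real s - 1))\<^sup>2 \<le> real (2*s) * ((cmod (ls ! 0))\<^sup>2 * real (2*s))"
    using band_mat_mult_ones[of s] unfolding e_def[symmetric]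
    by (metis mult_left_mono of_nat_0_le_iff order_trans)
  then have "(real s)\<^sup>2 * (3 * real s - 1)\<^sup>2 \<le> (real s)\<^sup>2 * (4 * (cmod (ls ! 0))\<^sup>2)"
    by (simp add: power_mult_distrib power2_eq_square mult_ac)
  then show ?thesis
    using s by (simp add: power_divide)
qed

lemma band_eigenvalue_mem_labeling:
  assumes s: "s \<ge> 1" and L: "eigen_labeling (band_mat s) ls"
  shows "complex_of_real (band_eigenvalue s) \<in> set ls"
proof -
  have "eigenvalue (map_mat complex_of_real (band_mat s)) (complex_of_real (band_eigenvalue s))"
    using band_eigenvector[OF s] unfolding eigenvalue_def by blast
  then show ?thesis
    using eigenvalue_iff_mem_char_poly_roots[of "map_mat complex_of_real (band_mat s)" "2*s" ls] L
    by (simp add: eigen_labeling_def band_mat_def)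
qed

lemma band_eigenvalue_index_le_1:
  assumes s: "s \<ge> 1" and L: "eigen_labeling (band_mat s) ls"
    and j: "j < 2*s" "ls ! j = complex_of_real (band_eigenvalue s)"
  shows "j \<le> 1"
proof (rule ccontr)
  let ?\<mu> = "band_eigenvalue s"
  assume "\<not> j \<le> 1"
  have len: "length ls = 2*s" using L by (simp add: eigen_labeling_def band_mat_def)
  have "cmod (ls ! j) \<le> cmod (ls ! 1)"
    using eigen_labeling_mono[OF L, of 1 j] \<open>\<not> j \<le> 1\<close> j len by simp
  then have "?\<mu>\<^sup>2 \<le> (cmod (ls ! 1))\<^sup>2"
    using j band_eigenvalue_pos[OF s] by (intro power_mono) auto
  moreover have "(\<Sum>i\<in>{0, 1, j}. (cmod (ls ! i))\<^sup>2) \<le> (\<Sum>i<2*s. (cmod (ls ! i))\<^sup>2)"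
    using j \<open>\<not> j \<le> 1\<close> by (intro sum_mono2) auto
  moreover have "(\<Sum>i<2*s. (cmod (ls ! i))\<^sup>2) = real s * (3 * real s - 1)"
    using band_labeling_sum_sq[OF L] len by (simp add: sum_list_sum_nth atLeast0LessThan)
  moreover have "(\<Sum>i\<in>{0, 1, j}. (cmod (ls ! i))\<^sup>2) = (cmod (ls ! 0))\<^sup>2 + (cmod (ls ! 1))\<^sup>2 + ?\<mu>\<^sup>2"
    using j \<open>\<not> j \<le> 1\<close> band_eigenvalue_pos[OF s] by simp
  ultimately have "((3 * real s - 1) / 2)\<^sup>2 + 2 * ?\<mu>\<^sup>2 \<le> real s * (3 * real s - 1)"
    using band_labeling_largest[OF s L] by linarith
  then show False
    using band_eigenvalue_lower[OF s] by simp
qed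

lemma band_labeling_second:
  assumes s: "s \<ge> 1" and L: "eigen_labeling (band_mat s) ls"
  shows "ls ! 1 = complex_of_real (band_eigenvalue s)"
proof -
  let ?\<mu> = "band_eigenvalue s"
  have len: "length ls = 2*s" using L by (simp add: eigen_labeling_def band_mat_def)
  obtain j where j: "j < 2*s" "ls ! j = complex_of_real ?\<mu>"
    using band_eigenvalue_mem_labeling[OF s L] len by (auto simp: in_set_conv_nth)
  consider "j = 1" | "j = 0" "s = 1" | "j = 0" "s \<ge> 2"
    using band_eigenvalue_index_le_1[OF s L j] s by linarith
  then show ?thesis
  proof cases
    case 1
    then show ?thesis using j by simp
  next
    case 2
    then obtain a b where "ls = [a, b]"
      using len by (auto simp: numeral_2_eq_2 length_Suc_conv)
    then show ?thesis
      using band_labeling_sum[OF s L] j 2 band_eigenvalue_one by simp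
  next
    case 3
    have "((3 * real s - 1) / 2)\<^sup>2 \<le> ?\<mu>\<^sup>2"
      using band_labeling_largest[OF s L] j 3 band_eigenvalue_pos[OF s] by simp
    then have "(3 * real s - 1) / 2 \<le> ?\<mu>"
      by (rule power2_le_imp_le[OF _ less_imp_le[OF band_eigenvalue_pos[OF s]]])
    then show ?thesis
      using band_eigenvalue_upper[of s] 3 by simp
  qed
qed

theorem theorem6:
  fixes s :: nat
  assumes "s \<ge> 1"
  shows "(\<exists>ls. eigen_labeling (band_mat s) ls) \<and>
         (\<forall>ls. eigen_labeling (band_mat s) ls \<longrightarrow>
            cmod (ls ! 1) = 1 / sqrt (2 + 2 * cos (real (2*s) * pi / real (2*s+1))) \<and>
            eigenvector (map_mat complex_of_real (band_mat s))
                        (map_vec complex_of_real (band_u s)) (ls ! 1))"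
  using eigen_labeling_exists[OF band_mat_carrier] band_labeling_second[OF assms]
    band_eigenvalue_closed_form[OF assms] band_eigenvalue_pos[OF assms] band_eigenvector[OF assms]
  by auto

end
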